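(* (i) The infinite fixed point beginning with $a$ of the morphism $a\to aba$, $b\to d$, $c\to b$, $d\to c$ is $2$-automatic. (ii) The infinite fixed point beginning with $a$ of the morphism $a\to aba$, $b\to c$, $c\to b$ is $2$-automatic; more precisely, cutting it into consecutive non-overlapping blocks of length $2$, only the blocks $ab$ and $ac$ occur, and coding $ab=0$, $ac=1$ the resulting sequence is the fixed point of $0\to 01$, $1\to 00$.
   Context: For an integer $q\ge 2$, a sequence is $q$-automatic if it is the image under a letter-to-letter map of a fixed point of a morphism all of whose letter-images have length $q$. *)

theory Defs
  imports Main
begin

text \<open>The image of x under sigma is the (possibly finite) concatenation of sigma (x 0), sigma (x 1), ...
  x is a fixed point of sigma iff that image is infinite and equals x, i.e. every finite
  prefix sigma(x 0 ... x (m-1)) is a prefix of x and these prefixes have unbounded length.\<close>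

definition morph_prefix :: "('a \<Rightarrow> 'a list) \<Rightarrow> (nat \<Rightarrow> 'a) \<Rightarrow> nat \<Rightarrow> 'a list" where
  "morph_prefix \<sigma> x m = concat (map \<sigma> (map x [0..<m]))"

definition is_fixed_point :: "('a \<Rightarrow> 'a list) \<Rightarrow> (nat \<Rightarrow> 'a) \<Rightarrow> bool" where
  "is_fixed_point \<sigma> x \<longleftrightarrow>
     (\<forall>n. \<exists>m. n \<le> length (morph_prefix \<sigma> x m)) \<and>
     (\<forall>m. \<forall>i < length (morph_prefix \<sigma> x m). morph_prefix \<sigma> x m ! i = x i)"

text \<open>q-automatic: image under a letter-to-letter map of a fixed point of a q-uniform morphism
  over a finite alphabet (letters coded as natural numbers in a finite set A).\<close>

definition q_automatic :: "nat \<Rightarrow> (nat \<Rightarrow> 'b) \<Rightarrow> bool" where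
  "q_automatic q u \<longleftrightarrow> 2 \<le> q \<and>
     (\<exists>(A::nat set) \<tau> y (\<phi>::nat \<Rightarrow> 'b).
        finite A \<and> (\<forall>c\<in>A. length (\<tau> c) = q \<and> set (\<tau> c) \<subseteq> A) \<and>
        (\<forall>n. y n \<in> A) \<and> is_fixed_point \<tau> y \<and> (\<forall>n. u n = \<phi> (y n)))"

datatype letter4 = La | Lb | Lc | Ld
datatype letter3 = Ma | Mb | Mc

fun sigma4 :: "letter4 \<Rightarrow> letter4 list" where
  "sigma4 La = [La, Lb, La]"
| "sigma4 Lb = [Ld]"
| "sigma4 Lc = [Lb]"
| "sigma4 Ld = [Lc]"

fun sigma3 :: "letter3 \<Rightarrow> letter3 list" where
  "sigma3 Ma = [Ma, Mb, Ma]"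
| "sigma3 Mb = [Mc]"
| "sigma3 Mc = [Mb]"

definition tau01 :: "nat \<Rightarrow> nat list" where
  "tau01 c = (if c = 0 then [0, 1] else [0, 0])"

end

theory Submission
  imports Defs "HOL-Library.Countable"
begin

text \<open>Let \<open>\<sigma> a = a (g a) a\<close> and \<open>\<sigma> (g y) = g (g y)\<close> for every letter \<open>y\<close>. The word \<open>x\<close>
  with \<open>x (2n) = a\<close> and \<open>x (2n+1) = g (x n)\<close> is a fixed point of \<open>\<sigma>\<close>: the images of
  \<open>x (2k) = a\<close> and \<open>x (2k+1) = g (x k)\<close> together read \<open>a (g a) a g (g (x k))\<close>, which is
  \<open>x (4k) \<dots> x (4k+3)\<close>. Since \<open>\<sigma>\<close> is non-erasing and \<open>|\<sigma> a| \<ge> 2\<close>, it is the only fixed point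
  starting with \<open>a\<close>, and by construction it is the fixed point of the 2-uniform morphism
  \<open>c \<mapsto> a (g c)\<close>. For \<open>a \<mapsto> aba, b \<mapsto> c, c \<mapsto> b\<close> the map \<open>g\<close> sends \<open>a\<close> to \<open>b\<close> and swaps \<open>b\<close>
  and \<open>c\<close>, so the 2-blocks are \<open>a (g (x n))\<close> with \<open>g (x n) \<in> {b, c}\<close>, and the block code
  \<open>[g (x n) = c]\<close> obeys \<open>0 \<mapsto> 01\<close>, \<open>1 \<mapsto> 00\<close>.\<close>

lemma morph_prefix_Suc: "morph_prefix \<sigma> x (Suc m) = morph_prefix \<sigma> x m @ \<sigma> (x m)"
  by (simp add: morph_prefix_def)

lemma morph_prefix_mono:
  assumes "m \<le> m'"
  obtains ys where "morph_prefix \<sigma> x m' = morph_prefix \<sigma> x m @ ys"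
proof
  obtain k where "m' = m + k" using assms le_Suc_ex by blast
  then show "morph_prefix \<sigma> x m' = morph_prefix \<sigma> x m @ concat (map \<sigma> (map x [m..<m']))"
    by (simp add: morph_prefix_def upt_add_eq_append[OF le0])
qed

lemma is_fixed_pointI:
  assumes "\<And>m. \<exists>m' \<ge> m. \<exists>L \<ge> m. morph_prefix \<sigma> x m' = map x [0..<L]"
  shows "is_fixed_point \<sigma> x"
  unfolding is_fixed_point_def
proof (intro conjI allI impI)
  fix n
  from assms obtain m' L where "L \<ge> n" "morph_prefix \<sigma> x m' = map x [0..<L]" by blast
  then show "\<exists>m. n \<le> length (morph_prefix \<sigma> x m)" by (intro exI[of _ m']) simp
next
  fix m i assume i: "i < length (morph_prefix \<sigma> x m)"
  from assms obtain m' L where "m' \<ge> m" and L: "morph_prefix \<sigma> x m' = map x [0..<L]" by blast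
  obtain ys where ys: "morph_prefix \<sigma> x m' = morph_prefix \<sigma> x m @ ys"
    using \<open>m' \<ge> m\<close> by (rule morph_prefix_mono)
  have "morph_prefix \<sigma> x m ! i = (morph_prefix \<sigma> x m @ ys) ! i"
    using i by (simp add: nth_append)
  also have "\<dots> = map x [0..<L] ! i" using ys L by simp
  also have "\<dots> = x i"
    using i arg_cong[OF ys[unfolded L], of length] by simp
  finally show "morph_prefix \<sigma> x m ! i = x i" .
qed

lemma length_morph_prefix_Suc_ge:
  assumes "\<And>c. \<sigma> c \<noteq> []"
  shows "k + length (\<sigma> (x 0)) \<le> length (morph_prefix \<sigma> x (Suc k))"
proof (induction k)
  case 0 then show ?case by (simp add: morph_prefix_def)
next
  case (Suc k)
  have "\<sigma> (x (Suc k)) \<noteq> []" by (fact assms)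
  with Suc show ?case
    by (cases "\<sigma> (x (Suc k))") (simp_all add: morph_prefix_Suc[of \<sigma> x "Suc k"])
qed

text \<open>Uniqueness needs \<open>|\<sigma> (x 0)| \<ge> 2\<close>: then \<open>\<sigma> (x 0 \<dots> x (n-1))\<close> already determines \<open>x n\<close>.\<close>

lemma is_fixed_point_unique:
  assumes fp_x: "is_fixed_point \<sigma> x" and fp_z: "is_fixed_point \<sigma> z" and "x 0 = z 0"
    and nonerasing: "\<And>c. \<sigma> c \<noteq> []" and growing: "2 \<le> length (\<sigma> (x 0))"
  shows "x = z"
proof
  fix n show "x n = z n"
  proof (induction n rule: less_induct)
    case (less n)
    show ?case
    proof (cases n)
      case 0 then show ?thesis using \<open>x 0 = z 0\<close> by simp
    next
      case (Suc k)
      have "map x [0..<n] = map z [0..<n]" using less.IH by (auto intro: map_cong)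
      then have same: "morph_prefix \<sigma> x n = morph_prefix \<sigma> z n"
        by (simp only: morph_prefix_def)
      have "n < length (morph_prefix \<sigma> x n)"
        using length_morph_prefix_Suc_ge[where \<sigma> = \<sigma> and k = k and x = x, OF nonerasing]
          growing Suc by simp
      then show ?thesis
        using fp_x fp_z same unfolding is_fixed_point_def by metis
    qed
  qed
qed

lemma uniform_is_fixed_point:
  assumes "0 < q" and blocks: "\<And>n. \<tau> (y n) = map y [q*n..<q*n+q]"
  shows "is_fixed_point \<tau> y"
proof (rule is_fixed_pointI)
  have prefix: "morph_prefix \<tau> y m = map y [0..<q*m]" for m
  proof (induction m)
    case 0 then show ?case by (simp add: morph_prefix_def)
  next
    case (Suc m)
    then show ?case
      using upt_add_eq_append[of 0 "q*m" q] by (simp add: morph_prefix_Suc blocks add.commute)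
  qed
  fix m show "\<exists>m' \<ge> m. \<exists>L \<ge> m. morph_prefix \<tau> y m' = map y [0..<L]"
    using \<open>0 < q\<close> by (intro exI[of _ m] conjI exI[of _ "q*m"]) (simp_all add: prefix)
qed

text \<open>The alphabet of \<^const>\<open>q_automatic\<close> is a finite set of naturals; a finite countable
  alphabet is transported there along \<^const>\<open>to_nat\<close>.\<close>

lemma morph_prefix_conjugate:
  assumes "inj f"
  shows "morph_prefix (\<lambda>c. map f (\<tau> (inv f c))) (f \<circ> y) m = map f (morph_prefix \<tau> y m)"
  by (simp add: morph_prefix_def map_concat comp_def inv_f_f[OF assms])

lemma q_automatic_if_uniform_fixed_point:
  fixes \<tau> :: "'a :: {finite, countable} \<Rightarrow> 'a list"
  assumes "2 \<le> q" "\<And>c. length (\<tau> c) = q" "is_fixed_point \<tau> y"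
  shows "q_automatic q y"
  unfolding q_automatic_def
proof (intro conjI exI)
  let ?A = "range (to_nat :: 'a \<Rightarrow> nat)"
  let ?\<tau> = "\<lambda>c. map to_nat (\<tau> (inv to_nat c))"
  show "finite ?A" by simp
  show "\<forall>c \<in> ?A. length (?\<tau> c) = q \<and> set (?\<tau> c) \<subseteq> ?A"
    using assms(2) by auto
  show "\<forall>n. (to_nat \<circ> y) n \<in> ?A" by simp
  show "is_fixed_point ?\<tau> (to_nat \<circ> y)"
    using assms(3) unfolding is_fixed_point_def morph_prefix_conjugate[OF inj_to_nat]
    by simp
  show "\<forall>n. y n = inv to_nat ((to_nat \<circ> y) n)" by simp
qed fact

lemma uniform2_is_fixed_point:
  assumes "\<And>n. \<tau> (y n) = [y (2*n), y (Suc (2*n))]"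
  shows "is_fixed_point \<tau> y"
  by (rule uniform_is_fixed_point[of 2]) (simp_all add: assms upt_rec)

function toeplitz_word :: "('a \<Rightarrow> 'a) \<Rightarrow> 'a \<Rightarrow> nat \<Rightarrow> 'a" where
  "toeplitz_word g a n = (if even n then a else g (toeplitz_word g a (n div 2)))"
  by auto
termination
  by (relation "measure (\<lambda>(g, a, n). n)") (auto elim: oddE)

declare toeplitz_word.simps [simp del]

lemma toeplitz_word_even [simp]: "toeplitz_word g a (2*n) = a"
  by (subst toeplitz_word.simps) simp

lemma toeplitz_word_odd [simp]: "toeplitz_word g a (Suc (2*n)) = g (toeplitz_word g a n)"
  by (subst toeplitz_word.simps) simp

lemma toeplitz_word_0 [simp]: "toeplitz_word g a 0 = a"
  using toeplitz_word_even[of g a 0] by simp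

lemma toeplitz_word_uniform:
  "is_fixed_point (\<lambda>c. [a, g c]) (toeplitz_word g a)"
  by (rule uniform2_is_fixed_point) simp

lemma toeplitz_word_block:
  "map (toeplitz_word g a) [4*k..<4*k+4] = [a, g a, a, g (g (toeplitz_word g a k))]"
proof -
  have "[4*k..<4*k+4] = [2*(2*k), Suc (2*(2*k)), 2*Suc (2*k), Suc (2*Suc (2*k))]"
    by (simp add: upt_rec)
  then show ?thesis by (simp only: list.map toeplitz_word_even toeplitz_word_odd)
qed

lemma toeplitz_word_is_fixed_point:
  assumes \<sigma>a: "\<sigma> a = [a, g a, a]" and \<sigma>g: "\<And>y. \<sigma> (g y) = [g (g y)]"
  shows "is_fixed_point \<sigma> (toeplitz_word g a)"
proof (rule is_fixed_pointI)
  let ?x = "toeplitz_word g a"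
  have prefix: "morph_prefix \<sigma> ?x (2*k) = map ?x [0..<4*k]" for k
  proof (induction k)
    case 0 then show ?case by (simp add: morph_prefix_def)
  next
    case (Suc k)
    have "morph_prefix \<sigma> ?x (2 * Suc k) = map ?x [0..<4*k] @ [a, g a, a, g (g (?x k))]"
      using Suc by (simp add: morph_prefix_Suc \<sigma>a \<sigma>g)
    also have "\<dots> = map ?x [0..<4*k] @ map ?x [4*k..<4*k+4]"
      by (simp only: toeplitz_word_block)
    also have "\<dots> = map ?x [0..<4*k+4]"
      unfolding map_append[symmetric] upt_add_eq_append[OF le0, symmetric] ..
    also have "\<dots> = map ?x [0..<4 * Suc k]" by (simp add: add.commute)
    finally show ?case .
  qed
  fix m show "\<exists>m' \<ge> m. \<exists>L \<ge> m. morph_prefix \<sigma> ?x m' = map ?x [0..<L]"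
    by (intro exI[of _ "2*m"] conjI exI[of _ "4*m"]) (simp_all add: prefix)
qed

lemma toeplitz_word_fixed_point_iff:
  assumes \<sigma>a: "\<sigma> a = [a, g a, a]" and \<sigma>g: "\<And>y. \<sigma> (g y) = [g (g y)]"
    and nonerasing: "\<And>c. \<sigma> c \<noteq> []"
  shows "is_fixed_point \<sigma> x \<and> x 0 = a \<longleftrightarrow> x = toeplitz_word g a"
proof
  assume "is_fixed_point \<sigma> x \<and> x 0 = a"
  then show "x = toeplitz_word g a"
    using is_fixed_point_unique[OF _ toeplitz_word_is_fixed_point[OF \<sigma>a \<sigma>g] _ nonerasing] \<sigma>a
    by simp
qed (simp add: toeplitz_word_is_fixed_point[OF \<sigma>a \<sigma>g])

instance letter4 :: countable by countable_datatype
instance letter3 :: countable by countable_datatype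

instance letter4 :: finite
proof
  have "(UNIV :: letter4 set) \<subseteq> {La, Lb, Lc, Ld}" by (auto intro: letter4.exhaust)
  then show "finite (UNIV :: letter4 set)" by (rule finite_subset) simp
qed

instance letter3 :: finite
proof
  have "(UNIV :: letter3 set) \<subseteq> {Ma, Mb, Mc}" by (auto intro: letter3.exhaust)
  then show "finite (UNIV :: letter3 set)" by (rule finite_subset) simp
qed

fun g4 :: "letter4 \<Rightarrow> letter4" where
  "g4 La = Lb" | "g4 Lb = Ld" | "g4 Lc = Lb" | "g4 Ld = Lc"

fun g3 :: "letter3 \<Rightarrow> letter3" where
  "g3 Ma = Mb" | "g3 Mb = Mc" | "g3 Mc = Mb"

lemma sigma4_toeplitz_shape: "sigma4 La = [La, g4 La, La]" "sigma4 (g4 y) = [g4 (g4 y)]"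
  by (cases y; simp)+

lemma sigma3_toeplitz_shape: "sigma3 Ma = [Ma, g3 Ma, Ma]" "sigma3 (g3 y) = [g3 (g3 y)]"
  by (cases y; simp)+

lemma sigma4_nonerasing: "sigma4 c \<noteq> []" by (cases c) auto
lemma sigma3_nonerasing: "sigma3 c \<noteq> []" by (cases c) auto

lemma toeplitz_word_2_automatic:
  fixes a :: "'a :: {finite, countable}"
  shows "q_automatic 2 (toeplitz_word g a)"
  by (rule q_automatic_if_uniform_fixed_point[OF _ _ toeplitz_word_uniform]) auto

lemma toeplitz_word_g3_coding:
  defines "x \<equiv> toeplitz_word g3 Ma"
  shows "\<forall>n. (x (2*n), x (2*n+1)) \<in> {(Ma, Mb), (Ma, Mc)}"
    and "is_fixed_point tau01 (\<lambda>n. if (x (2*n), x (2*n+1)) = (Ma, Mb) then 0 else 1)"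
proof -
  have even: "x (2*n) = Ma" and odd: "x (Suc (2*n)) = g3 (x n)" for n by (simp_all add: x_def)
  show "\<forall>n. (x (2*n), x (2*n+1)) \<in> {(Ma, Mb), (Ma, Mc)}"
  proof
    fix n show "(x (2*n), x (2*n+1)) \<in> {(Ma, Mb), (Ma, Mc)}"
      by (cases "x n") (simp_all add: even odd)
  qed
  have code: "(if (x (2*n), x (2*n+1)) = (Ma, Mb) then 0 else 1) =
      (if g3 (x n) = Mb then 0 else 1::nat)" for n
    by (simp add: even odd)
  show "is_fixed_point tau01 (\<lambda>n. if (x (2*n), x (2*n+1)) = (Ma, Mb) then 0 else 1)"
    unfolding code
  proof (rule uniform2_is_fixed_point)
    fix n
    show "tau01 (if g3 (x n) = Mb then 0 else 1) =
        [if g3 (x (2*n)) = Mb then 0 else 1, if g3 (x (Suc (2*n))) = Mb then 0 else 1]"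
      by (cases "x n") (simp_all add: tau01_def even odd)
  qed
qed

theorem mainTheorem10:
  shows "((\<exists>x. is_fixed_point sigma4 x \<and> x 0 = La) \<and>
          (\<forall>x. is_fixed_point sigma4 x \<and> x 0 = La \<longrightarrow> q_automatic 2 x))
       \<and> ((\<exists>x. is_fixed_point sigma3 x \<and> x 0 = Ma) \<and>
          (\<forall>x. is_fixed_point sigma3 x \<and> x 0 = Ma \<longrightarrow>
              q_automatic 2 x \<and>
              (\<forall>n. (x (2*n), x (2*n+1)) \<in> {(Ma, Mb), (Ma, Mc)}) \<and>
              is_fixed_point tau01 (\<lambda>n. if (x (2*n), x (2*n+1)) = (Ma, Mb) then 0 else 1)))"
  unfolding toeplitz_word_fixed_point_iff[where g = g4, OF sigma4_toeplitz_shape sigma4_nonerasing]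
    toeplitz_word_fixed_point_iff[where g = g3, OF sigma3_toeplitz_shape sigma3_nonerasing]
  by (simp only: simp_thms) (intro conjI toeplitz_word_2_automatic toeplitz_word_g3_coding)

end
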